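(* Let $a\ge0$ and, for $m\ge0$, set $\Omega(a,m)=\{b\ge0:\ \sup_{t\in\mathbb{R}}|\cos(ta)-\cos(tb)|\le m\}$. (i) If $m<2$, then $\Omega(a,m)$ is finite, and every $b\in\Omega(a,m)$ has the form $b=\frac{pa}{q}$ where $p,q$ are odd positive integers with $\gcd(p,q)=1$, $1\le p\le\frac{\pi}{\arccos(m-1)}$ and $1\le q\le\frac{\pi}{\arccos(m-1)}$. (ii) If $m<\frac{8}{3\sqrt3}$, then $\Omega(a,m)=\{a\}$. *)

theory Defs
  imports Complex_Main
begin

definition Omega :: "real \<Rightarrow> real \<Rightarrow> real set" where
  "Omega a m = {b. b \<ge> 0 \<and> (SUP t::real. \<bar>cos (t * a) - cos (t * b)\<bar>) \<le> m}"

end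

theory Submission
  imports Defs "HOL-Analysis.Kronecker_Approximation_Theorem"
begin

text \<open>If \<open>b/a\<close> is irrational, Kronecker's theorem makes \<open>cos (t a) = 1\<close> and \<open>cos (t b)\<close>
  arbitrarily close to \<open>-1\<close> simultaneously, so the supremum is \<open>2\<close>. Hence for \<open>m < 2\<close> we
  have \<open>b = p a / q\<close> with \<open>p, q\<close> coprime, and after rescaling \<open>t\<close> the condition reads
  \<open>\<bar>cos (q s) - cos (p s)\<bar> \<le> m\<close> for all \<open>s\<close>. At \<open>s = \<pi>\<close> this forces \<open>p, q\<close> odd, and a
  Bezout argument produces an \<open>s\<close> with \<open>cos (p s) = -1\<close> and \<open>cos (q s) = cos (\<pi>/p)\<close>, whence
  \<open>1 + cos (\<pi>/p) \<le> m\<close>; this bounds \<open>p\<close> (and symmetrically \<open>q\<close>) by \<open>\<pi> / arccos (m - 1)\<close>.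
  For \<open>m < 8/(3\<surd>3)\<close> only \<open>p, q \<in> {1, 3}\<close> survive, and \<open>p \<noteq> q\<close> is excluded because
  \<open>cos (3s) - cos s\<close> attains \<open>8/(3\<surd>3)\<close> in absolute value.\<close>

lemma mem_Omega_iff:
  "b \<in> Omega a m \<longleftrightarrow> b \<ge> 0 \<and> (\<forall>t. \<bar>cos (t * a) - cos (t * b)\<bar> \<le> m)"
proof -
  have "bdd_above (range (\<lambda>t. \<bar>cos (t * a) - cos (t * b)\<bar>))"
    by (rule bdd_aboveI[of _ 2]) (auto simp: abs_le_iff; smt (verit) cos_le_one cos_ge_minus_one)
  then show ?thesis
    unfolding Omega_def by (auto simp: cSUP_le_iff)
qed

lemma cos_gap_of_irrational:
  fixes r m :: real
  assumes irrational: "r \<notin> \<rat>" and "m < 2"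
  shows "\<exists>t. \<bar>cos t - cos (t * r)\<bar> > m"
proof -
  obtain \<delta> where "\<delta> > 0" and near_pi: "\<And>x. \<bar>x - pi\<bar> < \<delta> \<Longrightarrow> cos x < 1 - m"
    using isCont_cos[of pi] \<open>m < 2\<close> unfolding continuous_at_eps_delta
    by (fastforce simp: dist_real_def dest: spec[of _ "2 - m"])
  obtain h k :: int where close: "\<bar>of_int k * r - of_int h - 1/2\<bar> < \<delta> / (2 * pi)"
    using sequence_of_fractional_parts_is_dense[OF irrational, of "\<delta> / (2 * pi)" "1/2"] \<open>\<delta> > 0\<close>
    by (metis divide_pos_pos pi_gt_zero zero_less_numeral mult_pos_pos)
  define t where "t = 2 * pi * of_int k"
  define x where "x = t * r - 2 * pi * of_int h"
  have "x - pi = 2 * pi * (of_int k * r - of_int h - 1/2)"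
    by (simp add: x_def t_def algebra_simps)
  then have "\<bar>x - pi\<bar> = 2 * pi * \<bar>of_int k * r - of_int h - 1/2\<bar>"
    by (simp add: abs_mult)
  also have "\<dots> < \<delta>"
    using close by (simp add: field_simps)
  finally have "cos x < 1 - m"
    by (rule near_pi)
  moreover have "cos (t * r) = cos x" "cos t = 1"
    by (simp_all add: x_def t_def cos_diff)
  ultimately show ?thesis
    by (intro exI[of _ t]) auto
qed

lemma cos_mult_witness:
  fixes p q :: nat
  assumes "0 < p" "odd q" "coprime p q"
  shows "\<exists>s. cos (real p * s) = -1 \<and> cos (real q * s) = cos (pi / real p)"
proof -
  have "coprime (int q) (2 * int p)"
    using assms(2,3) by (simp add: coprime_commute)
  then obtain u v where bezout: "u * int q + v * (2 * int p) = 1"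
    using bezout_int[of "int q" "2 * int p"] by auto
  moreover have "even (v * (2 * int p))"
    by simp
  ultimately have "odd u"
    by (metis even_add even_mult_iff odd_one)
  define s where "s = of_int u * pi / real p"
  have "real_of_int u * real q = 1 - 2 * real_of_int v * real p"
    using arg_cong[OF bezout, of real_of_int] by (simp add: algebra_simps)
  then have "real q * s = pi * (1 - 2 * real_of_int v * real p) / real p"
    by (simp add: s_def mult.commute mult.left_commute)
  also have "\<dots> = pi / real p - 2 * pi * of_int v"
    using assms(1) by (simp add: field_simps)
  finally have "real q * s = pi / real p - 2 * pi * of_int v" .
  moreover have "real p * s = pi * of_int u"
    using assms(1) by (simp add: s_def)
  ultimately show ?thesis
    using \<open>odd u\<close> by (intro exI[of _ s]) (simp add: cos_diff)
qed

lemma cos_pi_div_le_of_cos_gap: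
  fixes p q :: nat
  assumes "odd p" "odd q" "coprime p q"
    and gap: "\<forall>s. \<bar>cos (real q * s) - cos (real p * s)\<bar> \<le> m"
  shows "cos (pi / real p) + 1 \<le> m"
proof -
  obtain s where "cos (real p * s) = -1" "cos (real q * s) = cos (pi / real p)"
    using cos_mult_witness[of p q] assms by (auto intro: odd_pos)
  then show ?thesis
    using gap[rule_format, of s] by (simp add: abs_le_iff)
qed

lemma cos_gap_coprime_bounds:
  fixes p q :: nat
  assumes "coprime p q" "m < 2"
    and gap: "\<forall>s. \<bar>cos (real q * s) - cos (real p * s)\<bar> \<le> m"
  shows "odd p \<and> odd q \<and> cos (pi / real p) + 1 \<le> m \<and> cos (pi / real q) + 1 \<le> m"
proof -
  have "odd p \<longleftrightarrow> odd q"
    using gap[rule_format, of pi] \<open>m < 2\<close> by (cases "even p"; cases "even q") auto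
  moreover have "odd p \<or> odd q"
    using \<open>coprime p q\<close> by (metis coprime_common_divisor odd_one)
  ultimately have "odd p" "odd q"
    by auto
  moreover have "\<forall>s. \<bar>cos (real p * s) - cos (real q * s)\<bar> \<le> m"
    using gap by (simp add: abs_minus_commute)
  ultimately show ?thesis
    using cos_pi_div_le_of_cos_gap[of p q] cos_pi_div_le_of_cos_gap[of q p] gap \<open>coprime p q\<close>
    by (auto simp: coprime_commute)
qed

lemma mem_Omega_odd_ratio:
  assumes "a \<ge> 0" "m < 2" "b \<in> Omega a m"
  obtains p q :: nat where "odd p" "odd q" "coprime p q" "b = real p * a / real q"
    "cos (pi / real p) + 1 \<le> m" "cos (pi / real q) + 1 \<le> m"
    "\<forall>s. \<bar>cos (real q * s) - cos (real p * s)\<bar> \<le> m"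
proof -
  have "b \<ge> 0" and gap: "\<And>t. \<bar>cos (t * a) - cos (t * b)\<bar> \<le> m"
    using assms(3) by (auto simp: mem_Omega_iff)
  show ?thesis
  proof (cases "a = 0")
    case True
    have "b = 0"
    proof (rule ccontr)
      assume "b \<noteq> 0"
      then show False
        using gap[of "pi / b"] \<open>a = 0\<close> \<open>m < 2\<close> by simp
    qed
    then show ?thesis
      using that[of 1 1] gap[of 0] \<open>a = 0\<close> by simp
  next
    case False
    then have "a > 0"
      using assms(1) by simp
    have "b / a \<in> \<rat>"
    proof (rule ccontr)
      assume "b / a \<notin> \<rat>"
      then obtain t where "\<bar>cos t - cos (t * (b / a))\<bar> > m"
        using cos_gap_of_irrational \<open>m < 2\<close> by blast
      then show False
        using gap[of "t / a"] \<open>a > 0\<close> by simp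
    qed
    then obtain p q :: nat where "q \<noteq> 0" "\<bar>b / a\<bar> = real p / real q" "coprime p q"
      by (rule Rats_abs_nat_div_natE)
    then have b_eq: "b = real p * a / real q"
      using \<open>a > 0\<close> \<open>b \<ge> 0\<close> by (simp add: field_simps)
    have rescaled_gap: "\<forall>s. \<bar>cos (real q * s) - cos (real p * s)\<bar> \<le> m"
    proof
      fix s
      show "\<bar>cos (real q * s) - cos (real p * s)\<bar> \<le> m"
        using gap[of "real q * s / a"] \<open>a > 0\<close> \<open>q \<noteq> 0\<close> b_eq by (simp add: mult.commute)
    qed
    then show ?thesis
      using cos_gap_coprime_bounds[OF \<open>coprime p q\<close> \<open>m < 2\<close>] that b_eq \<open>coprime p q\<close>
      by blast
  qed
qed

lemma real_le_pi_div_arccos: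
  fixes p :: nat
  assumes "p \<ge> 1" "cos (pi / real p) + 1 \<le> m" "m < 2"
  shows "real p \<le> pi / arccos (m - 1)"
proof -
  have "-1 \<le> m - 1"
    using assms(2) cos_ge_minus_one[of "pi / real p"] by linarith
  have "pi / real p \<le> pi"
    using assms(1) by (simp add: divide_le_eq)
  then have "arccos (m - 1) \<le> pi / real p"
    using arccos_le_arccos[of "cos (pi / real p)" "m - 1"] assms(2,3) by (simp add: arccos_cos)
  moreover have "arccos (m - 1) > 0"
    using arccos_less_arccos[of "m - 1" 1] \<open>-1 \<le> m - 1\<close> assms(3) by simp
  ultimately show ?thesis
    using assms(1) by (simp add: field_simps)
qed

lemma finite_Omega:
  assumes "a \<ge> 0" "m < 2"
  shows "finite (Omega a m)"
proof -
  define N where "N = nat \<lceil>pi / arccos (m - 1)\<rceil>"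
  have "Omega a m \<subseteq> (\<lambda>(p, q). real p * a / real q) ` ({..N} \<times> {..N})"
  proof
    fix b assume "b \<in> Omega a m"
    then obtain p q :: nat where "odd p" "odd q" "b = real p * a / real q"
      "cos (pi / real p) + 1 \<le> m" "cos (pi / real q) + 1 \<le> m"
      using mem_Omega_odd_ratio assms by metis
    moreover have "real n \<le> real N" if "odd n" "cos (pi / real n) + 1 \<le> m" for n
      unfolding N_def using that assms(2)
      by (intro order_trans[OF real_le_pi_div_arccos real_nat_ceiling_ge]) (auto simp: odd_pos Suc_leI)
    ultimately show "b \<in> (\<lambda>(p, q). real p * a / real q) ` ({..N} \<times> {..N})"
      by (auto intro!: image_eqI[of _ _ "(p, q)"])
  qed
  then show ?thesis
    by (rule finite_subset) simp
qed

lemma odd_cos_pi_div_le_imp_1_or_3: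
  fixes p :: nat
  assumes "odd p" "cos (pi / real p) + 1 \<le> m" "m < sqrt 2 / 2 + 1"
  shows "p = 1 \<or> p = 3"
proof (rule ccontr)
  assume "\<not> (p = 1 \<or> p = 3)"
  with \<open>odd p\<close> have "p \<ge> 4"
    by presburger
  then have "pi / real p \<le> pi / 4" "pi / real p \<le> pi"
    by (simp_all add: field_simps)
  then have "cos (pi / 4) \<le> cos (pi / real p)"
    by (subst cos_mono_le_eq) auto
  then show False
    using assms(2,3) cos_45 by linarith
qed

lemma cos_triple_gap: "\<exists>s. \<bar>cos (3 * s) - cos s\<bar> = 8 / (3 * sqrt 3)"
proof -
  define c where "c = 1 / sqrt 3"
  have "0 < c" "c \<le> 1" "c ^ 2 = 1 / 3"
    by (simp_all add: c_def power_divide)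
  then have "cos (3 * arccos c) - cos (arccos c) = 4 * c * c ^ 2 - 4 * c"
    by (simp add: cos_treble_cos cos_arccos power3_eq_cube power2_eq_square)
  also have "\<dots> = - (8 / 3) * c"
    unfolding \<open>c ^ 2 = 1 / 3\<close> by simp
  finally have "cos (3 * arccos c) - cos (arccos c) = - (8 / 3) * c" .
  with \<open>0 < c\<close> show ?thesis
    by (intro exI[of _ "arccos c"]) (simp add: c_def)
qed

lemma Omega_eq_singleton:
  assumes "a \<ge> 0" "m \<ge> 0" "m < 8 / (3 * sqrt 3)"
  shows "Omega a m = {a}"
proof -
  have "43 / 25 < sqrt 3" "7 / 5 < sqrt 2"
    by (rule real_less_rsqrt; simp add: power2_eq_square)+
  then have "8 / (3 * sqrt 3) < 39 / 25"
    by (simp add: divide_less_eq)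
  with \<open>7 / 5 < sqrt 2\<close> have "m < 2" "m < sqrt 2 / 2 + 1"
    using assms(3) by linarith+
  have "b = a" if "b \<in> Omega a m" for b
  proof -
    obtain p q :: nat where pq: "odd p" "odd q" "coprime p q" "b = real p * a / real q"
      "cos (pi / real p) + 1 \<le> m" "cos (pi / real q) + 1 \<le> m"
      and gap: "\<forall>s. \<bar>cos (real q * s) - cos (real p * s)\<bar> \<le> m"
      using mem_Omega_odd_ratio \<open>a \<ge> 0\<close> \<open>m < 2\<close> \<open>b \<in> Omega a m\<close> by metis
    have "(p = 1 \<or> p = 3) \<and> (q = 1 \<or> q = 3)"
      using odd_cos_pi_div_le_imp_1_or_3 pq \<open>m < sqrt 2 / 2 + 1\<close> by blast
    moreover obtain s where "\<bar>cos (3 * s) - cos s\<bar> = 8 / (3 * sqrt 3)"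
      using cos_triple_gap by blast
    ultimately have "p = q"
      using gap[rule_format, of s] \<open>coprime p q\<close> assms(3) by (auto simp: abs_minus_commute)
    then show "b = a"
      using pq(1,4) by (simp add: odd_pos)
  qed
  then show ?thesis
    using assms(1,2) by (auto simp: mem_Omega_iff)
qed

theorem lemma3p5:
  fixes a m :: real
  assumes "a \<ge> 0" and "m \<ge> 0"
  shows "(m < 2 \<longrightarrow>
            finite (Omega a m) \<and>
            (\<forall>b\<in>Omega a m. \<exists>p q :: nat.
               odd p \<and> odd q \<and> coprime p q \<and>
               1 \<le> p \<and> real p \<le> pi / arccos (m - 1) \<and>
               1 \<le> q \<and> real q \<le> pi / arccos (m - 1) \<and>
               b = real p * a / real q))
       \<and> (m < 8 / (3 * sqrt 3) \<longrightarrow> Omega a m = {a})"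
proof (intro conjI impI ballI)
  assume "m < 2"
  then show "finite (Omega a m)"
    using finite_Omega \<open>a \<ge> 0\<close> by blast
  fix b assume "b \<in> Omega a m"
  then obtain p q :: nat where "odd p" "odd q" "coprime p q" "b = real p * a / real q"
    "cos (pi / real p) + 1 \<le> m" "cos (pi / real q) + 1 \<le> m"
    using mem_Omega_odd_ratio \<open>a \<ge> 0\<close> \<open>m < 2\<close> by metis
  moreover from calculation have "1 \<le> p" "1 \<le> q"
    by (simp_all add: odd_pos Suc_leI)
  ultimately show "\<exists>p q :: nat. odd p \<and> odd q \<and> coprime p q \<and>
      1 \<le> p \<and> real p \<le> pi / arccos (m - 1) \<and>
      1 \<le> q \<and> real q \<le> pi / arccos (m - 1) \<and> b = real p * a / real q"
    using real_le_pi_div_arccos \<open>m < 2\<close> by blast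
next
  assume "m < 8 / (3 * sqrt 3)"
  then show "Omega a m = {a}"
    using Omega_eq_singleton assms by blast
qed

end
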